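(* Let $\sigma\in C(\mathbb{R},\mathbb{R})$ be a function which is not a polynomial, and let $\mathbf{F}_\sigma$ be the family of all kernels on $\mathbb{R}^n\times\mathbb{R}^n$ of the form \[ \mathbf{k}(x,y\,|\,\theta)=\sum_{j=1}^{m}c_j\,\sigma(\langle x,w_j\rangle+b_j)\,\sigma(\langle y,w_j\rangle+b_j), \] where $\theta=(c,w,b)$, $m\in\mathbb{N}$, $c_j>0$, $b_j\in\mathbb{R}$, $w_j\in\mathbb{R}^n$. Then $\mathbf{F}_\sigma$ is universal: for every continuous $f:\mathbb{R}^n\to\mathbb{R}$, every compact $K\subset\mathbb{R}^n$ and every $\epsilon>0$ there exist $\mathbf{k}\in\mathbf{F}_\sigma$, an integer $s\in\mathbb{N}$, coefficients $d_1,\dots,d_s\in\mathbb{R}$ and points $x_1,\dots,x_s\in\mathbb{R}^n$ such that \[ \sup_{x\in K}\Big|f(x)-\sum_{l=1}^{s}d_l\,\mathbf{k}(x,x_l)\Big|<\epsilon . \]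
   Context: $\langle\cdot,\cdot\rangle$ denotes the standard inner product on $\mathbb{R}^n$. *)

theory Defs
  imports "HOL-Analysis.Analysis" "HOL-Computational_Algebra.Polynomial"
begin

definition is_polynomial_fun :: "(real \<Rightarrow> real) \<Rightarrow> bool" where
  "is_polynomial_fun \<sigma> \<longleftrightarrow> (\<exists>p :: real poly. \<forall>t. \<sigma> t = poly p t)"

definition kernel_family :: "(real \<Rightarrow> real) \<Rightarrow> (real^'n \<Rightarrow> real^'n \<Rightarrow> real) set" where
  "kernel_family \<sigma> = {k. \<exists>(m::nat) (c::nat \<Rightarrow> real) (w::nat \<Rightarrow> real^'n) (b::nat \<Rightarrow> real).
      (\<forall>j<m. c j > 0) \<and>
      k = (\<lambda>x y. \<Sum>j<m. c j * \<sigma> (inner x (w j) + b j) * \<sigma> (inner y (w j) + b j))}"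

end

theory Submission
  imports Defs "HOL-Library.Function_Algebras"
begin

text \<open>
  Call a function approximable if it is a locally uniform limit of networks
  \<open>x \<mapsto> \<Sum>\<^sub>j a\<^sub>j \<sigma>(\<langle>w\<^sub>j, x\<rangle> + b\<^sub>j)\<close>. The approximable functions form a vector space that is
  closed under such limits and under composition with \<open>x \<mapsto> \<langle>w, x\<rangle> + b\<close>.

  In one variable, let \<open>G\<^sub>k\<close> be a \<open>k\<close>-fold antiderivative of \<open>\<sigma>\<close> and \<open>\<Delta>\<^sub>h\<close> the forward difference
  with step \<open>h\<close>. By Riemann sums \<open>F = \<Delta>\<^sub>h\<^sup>k G\<^sub>k\<close> is approximable, and \<open>F\<close> is \<open>k\<close> times continuously
  differentiable with \<open>k\<close>-th derivative \<open>\<Delta>\<^sub>h\<^sup>k \<sigma>\<close>. Differentiating \<open>F(w t + b)\<close> \<open>k\<close> times in \<open>w\<close>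
  at \<open>w = 0\<close>, through difference quotients, shows that \<open>t\<^sup>k (\<Delta>\<^sub>h\<^sup>k \<sigma>)(b)\<close> is approximable. If
  \<open>\<Delta>\<^sub>h\<^sup>k \<sigma>\<close> vanished for every \<open>h > 0\<close>, each \<open>\<Delta>\<^sub>h\<^sup>k G\<^sub>k\<close> would be a polynomial of degree at most
  \<open>k\<close>, and so would be \<open>\<sigma>\<close>, the pointwise limit of \<open>\<Delta>\<^sub>h\<^sup>k G\<^sub>k / h\<^sup>k\<close> as \<open>h \<rightarrow> 0\<close>. Hence all
  monomials, and with them \<open>exp\<close>, are approximable. Composing with \<open>x \<mapsto> \<langle>w, x\<rangle>\<close> gives the
  functions \<open>exp \<langle>w, x\<rangle>\<close>, whose span is a point-separating algebra and hence dense by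
  Stone--Weierstrass.

  A network with coefficient vector \<open>a\<close> and feature vector \<open>\<phi>(x) = (\<sigma>(\<langle>w\<^sub>j, x\<rangle> + b\<^sub>j))\<^sub>j\<close> is
  \<open>\<langle>a, \<phi>(x)\<rangle>\<close>. Projecting \<open>a\<close> orthogonally onto the span of the feature vectors writes
  \<open>a = \<Sum>\<^sub>l d\<^sub>l \<phi>(x\<^sub>l) + r\<close> with \<open>r\<close> orthogonal to every \<open>\<phi>(x)\<close>, so the network equals
  \<open>\<Sum>\<^sub>l d\<^sub>l k(x, x\<^sub>l)\<close> for the kernel \<open>k(x, y) = \<langle>\<phi>(x), \<phi>(y)\<rangle>\<close>.
\<close>

section \<open>Locally uniform closure of ridge networks\<close>

interpretation fun_space: vector_space "\<lambda>(c::real) (f::'a \<Rightarrow> real) x. c * f x"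
  by unfold_locales (auto simp: fun_eq_iff algebra_simps)

lemma sum_fun_apply: "(\<Sum>i\<in>I. f i) x = (\<Sum>i\<in>I. f i x)"
  by (induction I rule: infinite_finite_induct) auto

lemma subspace_compose_preimage:
  assumes "fun_space.subspace S"
  shows "fun_space.subspace {g. (\<lambda>x. g (\<phi> x)) \<in> S}"
  using fun_space.subspace_0[OF assms] fun_space.subspace_add[OF assms]
    fun_space.subspace_scale[OF assms]
  by (auto simp: fun_space.subspace_def zero_fun_def plus_fun_def)

lemma subspace_multiplier_preimage:
  assumes "fun_space.subspace S"
  shows "fun_space.subspace {g. (\<lambda>x. u x * g x) \<in> S}"
  using fun_space.subspace_0[OF assms] fun_space.subspace_add[OF assms]
    fun_space.subspace_scale[OF assms]
  by (auto simp: fun_space.subspace_def zero_fun_def plus_fun_def distrib_left mult.left_commute)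

definition ridge_nets :: "(real \<Rightarrow> real) \<Rightarrow> ('a::real_inner \<Rightarrow> real) set" where
  "ridge_nets \<sigma> = fun_space.span (range (\<lambda>(w, b) x. \<sigma> (w \<bullet> x + b)))"

lemma ridge_in_ridge_nets: "(\<lambda>x. \<sigma> (w \<bullet> x + b)) \<in> ridge_nets \<sigma>"
  unfolding ridge_nets_def by (rule fun_space.span_base) auto

lemma ridge_nets_explicit:
  assumes "h \<in> ridge_nets \<sigma>"
  shows "\<exists>(m::nat) a w b. h = (\<lambda>x. \<Sum>j<m. a j * \<sigma> (w j \<bullet> x + b j))"
  using assms unfolding ridge_nets_def
proof (induction rule: fun_space.span_induct_alt)
  case base
  show ?case by (rule exI[where x = "0::nat"]) (simp add: fun_eq_iff)
next
  case (step c g h)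
  from step.hyps obtain v q where g: "g = (\<lambda>x. \<sigma> (v \<bullet> x + q))" by auto
  from step.IH obtain m :: nat and a w b where h: "h = (\<lambda>x. \<Sum>j<m. a j * \<sigma> (w j \<bullet> x + b j))"
    by blast
  show ?case
    by (intro exI[of _ "Suc m"] exI[of _ "a(m := c)"] exI[of _ "w(m := v)"] exI[of _ "b(m := q)"])
      (simp add: g h fun_eq_iff)
qed

lemma ridge_nets_compose_affine:
  fixes h :: "real \<Rightarrow> real" and v :: "'a::real_inner"
  assumes "h \<in> ridge_nets \<sigma>"
  shows "(\<lambda>x. h (v \<bullet> x + q)) \<in> (ridge_nets \<sigma> :: ('a \<Rightarrow> real) set)"
  using assms unfolding ridge_nets_def
proof (induction rule: fun_space.span_induct)
  case base
  show ?case by (rule subspace_compose_preimage[OF fun_space.subspace_span])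
next
  case (step g)
  then obtain w b where "g = (\<lambda>t. \<sigma> (w * t + b))" by auto
  then show ?case
    using ridge_in_ridge_nets[of \<sigma> "w *\<^sub>R v" "w * q + b", unfolded ridge_nets_def]
    by (simp add: algebra_simps)
qed

definition locally_uniform_closure :: "('a::topological_space \<Rightarrow> real) set \<Rightarrow> ('a \<Rightarrow> real) set" where
  "locally_uniform_closure N =
     {g. \<forall>K \<epsilon>. compact K \<longrightarrow> \<epsilon> > 0 \<longrightarrow> (\<exists>h\<in>N. \<forall>x\<in>K. \<bar>g x - h x\<bar> < \<epsilon>)}"

lemma locally_uniform_closureI:
  "(\<And>K \<epsilon>. compact K \<Longrightarrow> \<epsilon> > 0 \<Longrightarrow> \<exists>h\<in>N. \<forall>x\<in>K. \<bar>g x - h x\<bar> < \<epsilon>) \<Longrightarrow> g \<in> locally_uniform_closure N"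
  unfolding locally_uniform_closure_def by blast

lemma locally_uniform_closureD:
  "g \<in> locally_uniform_closure N \<Longrightarrow> compact K \<Longrightarrow> \<epsilon> > 0 \<Longrightarrow> \<exists>h\<in>N. \<forall>x\<in>K. \<bar>g x - h x\<bar> < \<epsilon>"
  unfolding locally_uniform_closure_def by blast

lemma subset_locally_uniform_closure: "N \<subseteq> locally_uniform_closure N"
proof
  fix g assume "g \<in> N"
  then show "g \<in> locally_uniform_closure N"
    by (intro locally_uniform_closureI bexI[of _ g]) auto
qed

lemma locally_uniform_closure_closed:
  assumes "g \<in> locally_uniform_closure (locally_uniform_closure N)"
  shows "g \<in> locally_uniform_closure N"
proof (rule locally_uniform_closureI)
  fix K :: "'a set" and \<epsilon> :: real assume K: "compact K" and \<epsilon>: "\<epsilon> > 0"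
  obtain h where h: "h \<in> locally_uniform_closure N" "\<forall>x\<in>K. \<bar>g x - h x\<bar> < \<epsilon>/2"
    using locally_uniform_closureD[OF assms K, of "\<epsilon>/2"] \<epsilon> by auto
  obtain h' where h': "h' \<in> N" "\<forall>x\<in>K. \<bar>h x - h' x\<bar> < \<epsilon>/2"
    using locally_uniform_closureD[OF h(1) K, of "\<epsilon>/2"] \<epsilon> by auto
  show "\<exists>h'\<in>N. \<forall>x\<in>K. \<bar>g x - h' x\<bar> < \<epsilon>"
  proof (intro bexI[OF _ h'(1)] ballI)
    fix x assume "x \<in> K"
    with h(2) h'(2) have "\<bar>g x - h x\<bar> < \<epsilon>/2" "\<bar>h x - h' x\<bar> < \<epsilon>/2" by auto
    then show "\<bar>g x - h' x\<bar> < \<epsilon>" by linarith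
  qed
qed

lemma locally_uniform_closure_add:
  assumes N: "fun_space.subspace N"
    and g: "g \<in> locally_uniform_closure N" and h: "h \<in> locally_uniform_closure N"
  shows "g + h \<in> locally_uniform_closure N"
proof (rule locally_uniform_closureI)
  fix K :: "'a set" and \<epsilon> :: real assume K: "compact K" and \<epsilon>: "\<epsilon> > 0"
  obtain g' where g': "g' \<in> N" "\<forall>x\<in>K. \<bar>g x - g' x\<bar> < \<epsilon>/2"
    using locally_uniform_closureD[OF g K, of "\<epsilon>/2"] \<epsilon> by auto
  obtain h' where h': "h' \<in> N" "\<forall>x\<in>K. \<bar>h x - h' x\<bar> < \<epsilon>/2"
    using locally_uniform_closureD[OF h K, of "\<epsilon>/2"] \<epsilon> by auto
  show "\<exists>f\<in>N. \<forall>x\<in>K. \<bar>(g + h) x - f x\<bar> < \<epsilon>"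
  proof (intro bexI[OF _ fun_space.subspace_add[OF N g'(1) h'(1)]] ballI)
    fix x assume "x \<in> K"
    with g'(2) h'(2) have "\<bar>g x - g' x\<bar> < \<epsilon>/2" "\<bar>h x - h' x\<bar> < \<epsilon>/2" by auto
    then show "\<bar>(g + h) x - (g' + h') x\<bar> < \<epsilon>"
      using abs_diff_triangle_ineq[of "g x" "h x" "g' x" "h' x"] by simp
  qed
qed

lemma locally_uniform_closure_scale:
  assumes N: "fun_space.subspace N" and g: "g \<in> locally_uniform_closure N"
  shows "(\<lambda>x. c * g x) \<in> locally_uniform_closure N"
proof (rule locally_uniform_closureI)
  fix K :: "'a set" and \<epsilon> :: real assume K: "compact K" and \<epsilon>: "\<epsilon> > 0"
  obtain g' where g': "g' \<in> N" "\<forall>x\<in>K. \<bar>g x - g' x\<bar> < \<epsilon> / (\<bar>c\<bar> + 1)"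
    using locally_uniform_closureD[OF g K, of "\<epsilon> / (\<bar>c\<bar> + 1)"] \<epsilon> by auto
  have "\<bar>c * g x - c * g' x\<bar> < \<epsilon>" if "x \<in> K" for x
  proof -
    have "\<bar>c * g x - c * g' x\<bar> = \<bar>c\<bar> * \<bar>g x - g' x\<bar>"
      by (simp add: abs_mult[symmetric] right_diff_distrib)
    also have "\<dots> \<le> (\<bar>c\<bar> + 1) * \<bar>g x - g' x\<bar>" by (simp add: mult_right_mono)
    also have "\<dots> < \<epsilon>" using g'(2) that by (simp add: pos_less_divide_eq mult.commute)
    finally show ?thesis .
  qed
  then show "\<exists>f\<in>N. \<forall>x\<in>K. \<bar>c * g x - f x\<bar> < \<epsilon>"
    using fun_space.subspace_scale[OF N g'(1), of c] by (intro bexI) auto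
qed

lemma subspace_locally_uniform_closure:
  assumes "fun_space.subspace N"
  shows "fun_space.subspace (locally_uniform_closure N)"
  unfolding fun_space.subspace_def
  using fun_space.subspace_0[OF assms] subset_locally_uniform_closure
    locally_uniform_closure_add[OF assms] locally_uniform_closure_scale[OF assms]
  by blast

lemma locally_uniform_closure_realI:
  fixes g :: "real \<Rightarrow> real"
  assumes "\<And>R \<epsilon>. \<epsilon> > 0 \<Longrightarrow> \<exists>h\<in>N. \<forall>t. \<bar>t\<bar> \<le> R \<longrightarrow> \<bar>g t - h t\<bar> < \<epsilon>"
  shows "g \<in> locally_uniform_closure N"
proof (rule locally_uniform_closureI)
  fix K :: "real set" and \<epsilon> :: real assume "compact K" "\<epsilon> > 0"
  then obtain R where "\<forall>t\<in>K. \<bar>t\<bar> \<le> R" "\<exists>h\<in>N. \<forall>t. \<bar>t\<bar> \<le> R \<longrightarrow> \<bar>g t - h t\<bar> < \<epsilon>"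
    using compact_imp_bounded[of K] assms by (auto simp: bounded_iff)
  then show "\<exists>h\<in>N. \<forall>t\<in>K. \<bar>g t - h t\<bar> < \<epsilon>" by blast
qed

abbreviation net_closure :: "(real \<Rightarrow> real) \<Rightarrow> ('a::real_inner \<Rightarrow> real) set" where
  "net_closure \<sigma> \<equiv> locally_uniform_closure (ridge_nets \<sigma>)"

lemma subspace_net_closure: "fun_space.subspace (net_closure \<sigma>)"
  unfolding ridge_nets_def by (intro subspace_locally_uniform_closure fun_space.subspace_span)

lemma net_closure_compose_affine:
  fixes g :: "real \<Rightarrow> real" and v :: "'a::real_inner"
  assumes g: "g \<in> net_closure \<sigma>"
  shows "(\<lambda>x. g (v \<bullet> x + q)) \<in> (net_closure \<sigma> :: ('a \<Rightarrow> real) set)"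
proof (rule locally_uniform_closureI)
  fix K :: "'a set" and \<epsilon> :: real assume "compact K" "\<epsilon> > 0"
  moreover have "continuous_on K (\<lambda>x. v \<bullet> x + q)" by (intro continuous_intros)
  ultimately obtain h where "h \<in> ridge_nets \<sigma>" "\<forall>t\<in>(\<lambda>x. v \<bullet> x + q) ` K. \<bar>g t - h t\<bar> < \<epsilon>"
    using locally_uniform_closureD[OF g compact_continuous_image] by metis
  then show "\<exists>h\<in>ridge_nets \<sigma>. \<forall>x\<in>K. \<bar>g (v \<bullet> x + q) - h x\<bar> < \<epsilon>"
    by (intro bexI[of _ "\<lambda>x. h (v \<bullet> x + q)"] ridge_nets_compose_affine) auto
qed

lemma net_closure_affine:
  fixes g :: "real \<Rightarrow> real"
  shows "g \<in> net_closure \<sigma> \<Longrightarrow> (\<lambda>t. g (p * t + q)) \<in> net_closure \<sigma>"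
  using net_closure_compose_affine[of g \<sigma> p q] by simp

lemma activation_in_net_closure: "\<sigma> \<in> net_closure \<sigma>"
  using ridge_in_ridge_nets[of \<sigma> "1::real" 0] subset_locally_uniform_closure by auto

lemma net_closure_scale: "g \<in> net_closure \<sigma> \<Longrightarrow> (\<lambda>x. c * g x) \<in> net_closure \<sigma>"
  by (rule fun_space.subspace_scale[OF subspace_net_closure])

lemma net_closure_diff:
  "g \<in> net_closure \<sigma> \<Longrightarrow> h \<in> net_closure \<sigma> \<Longrightarrow> (\<lambda>x. g x - h x) \<in> net_closure \<sigma>"
  using fun_space.subspace_diff[OF subspace_net_closure] by (simp add: fun_diff_def)

lemma net_closure_sum:
  "(\<And>i. i \<in> I \<Longrightarrow> f i \<in> net_closure \<sigma>) \<Longrightarrow> (\<lambda>x. \<Sum>i\<in>I. f i x) \<in> net_closure \<sigma>"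
  using fun_space.subspace_sum[OF subspace_net_closure, of I f] by (simp add: sum_fun_apply[abs_def])

section \<open>Smoothing by finite differences of antiderivatives\<close>

lemma continuous_imp_uniformly_continuous_on_interval:
  fixes g :: "real \<Rightarrow> real"
  assumes "continuous_on UNIV g" "\<epsilon> > 0"
  obtains \<delta> where "\<delta> > 0" "\<And>x y. \<bar>x\<bar> \<le> B \<Longrightarrow> \<bar>y\<bar> \<le> B \<Longrightarrow> \<bar>x - y\<bar> < \<delta> \<Longrightarrow> \<bar>g x - g y\<bar> < \<epsilon>"
proof -
  have "uniformly_continuous_on {-B..B} g"
    by (rule compact_uniformly_continuous) (auto intro: continuous_on_subset[OF assms(1)])
  then obtain \<delta> where "\<delta> > 0" "\<forall>x\<in>{-B..B}. \<forall>y\<in>{-B..B}. dist y x < \<delta> \<longrightarrow> dist (g y) (g x) < \<epsilon>"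
    using assms(2) unfolding uniformly_continuous_on_def by blast
  then show thesis
    by (intro that[of \<delta>]) (auto simp: dist_real_def abs_le_iff)
qed

lemma MVT_between:
  fixes f f' :: "real \<Rightarrow> real"
  assumes "\<And>x. DERIV f x :> f' x"
  obtains z where "min x y \<le> z" "z \<le> max x y" "f y - f x = (y - x) * f' z"
proof (cases x y rule: linorder_cases)
  case less
  then obtain z where "x < z" "z < y" "f y - f x = (y - x) * f' z"
    using MVT2[of x y f f'] assms by blast
  then show thesis using that[of z] by auto
next
  case equal
  then show thesis using that by auto
next
  case greater
  then obtain z where "y < z" "z < x" "f x - f y = (x - y) * f' z"
    using MVT2[of y x f f'] assms by blast
  then show thesis using that[of z] by (auto simp: algebra_simps)
qed

lemma increment_linearization_error:
  fixes G g :: "real \<Rightarrow> real"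
  assumes der: "\<And>x. DERIV G x :> g x" and "a \<le> b"
    and close: "\<And>z. a \<le> z \<Longrightarrow> z \<le> b \<Longrightarrow> \<bar>g z - g a\<bar> \<le> \<eta>"
  shows "\<bar>G b - G a - (b - a) * g a\<bar> \<le> (b - a) * \<eta>"
proof -
  obtain z where z: "a \<le> z" "z \<le> b" "G b - G a = (b - a) * g z"
    using MVT_between[OF der, of a b] \<open>a \<le> b\<close> by auto
  then have "G b - G a - (b - a) * g a = (b - a) * (g z - g a)"
    by (simp add: right_diff_distrib)
  then have "\<bar>G b - G a - (b - a) * g a\<bar> = (b - a) * \<bar>g z - g a\<bar>"
    using \<open>a \<le> b\<close> by (simp add: abs_mult)
  also have "\<dots> \<le> (b - a) * \<eta>" using close z \<open>a \<le> b\<close> by (intro mult_left_mono) auto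
  finally show ?thesis .
qed

lemma riemann_sum_error:
  fixes g G :: "real \<Rightarrow> real" and h :: real and N :: nat
  assumes der: "\<And>x. DERIV G x :> g x" and h: "h \<ge> 0" and N: "N > 0"
    and osc: "\<And>i z. i < N \<Longrightarrow> t + i * h / N \<le> z \<Longrightarrow> z \<le> t + (i + 1) * h / N \<Longrightarrow>
      \<bar>g z - g (t + i * h / N)\<bar> \<le> \<eta>"
  shows "\<bar>G (t + h) - G t - (\<Sum>i<N. h / N * g (t + i * h / N))\<bar> \<le> h * \<eta>"
proof -
  define a where "a i = t + real i * h / N" for i :: nat
  have step: "a (Suc i) - a i = h / N" for i using N by (simp add: a_def field_simps)
  have piece: "\<bar>G (a (Suc i)) - G (a i) - h / N * g (a i)\<bar> \<le> h / N * \<eta>" if "i < N" for i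
  proof -
    have "a i \<le> a (Suc i)" using step[of i] divide_nonneg_nonneg[of h N] h by linarith
    moreover have "\<bar>g z - g (a i)\<bar> \<le> \<eta>" if "a i \<le> z" "z \<le> a (Suc i)" for z
      using osc[OF \<open>i < N\<close>] that by (simp add: a_def add.commute)
    ultimately show ?thesis
      using increment_linearization_error[OF der, of "a i" "a (Suc i)" \<eta>] unfolding step by blast
  qed
  have "G (t + h) - G t = (\<Sum>i<N. G (a (Suc i)) - G (a i))"
    by (subst sum_lessThan_telescope) (use N in \<open>simp add: a_def\<close>)
  then have "\<bar>G (t + h) - G t - (\<Sum>i<N. h / N * g (t + i * h / N))\<bar>
      = \<bar>\<Sum>i<N. G (a (Suc i)) - G (a i) - h / N * g (a i)\<bar>"
    by (simp add: a_def sum_subtractf)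
  also have "\<dots> \<le> (\<Sum>i<N. h / N * \<eta>)"
    by (rule order_trans[OF sum_abs sum_mono]) (use piece in auto)
  also have "\<dots> = h * \<eta>" using N by simp
  finally show ?thesis .
qed

lemma riemann_sum_approximates_increment:
  fixes g G :: "real \<Rightarrow> real" and h :: real
  assumes cont: "continuous_on UNIV g" and der: "\<And>x. DERIV G x :> g x"
    and h: "h > 0" and \<epsilon>: "\<epsilon> > 0"
  obtains N :: nat where
    "\<And>t. \<bar>t\<bar> \<le> R \<Longrightarrow> \<bar>G (t + h) - G t - (\<Sum>i<N. h / N * g (t + i * h / N))\<bar> < \<epsilon>"
proof -
  obtain \<delta> where \<delta>: "\<delta> > 0" "\<And>x y. \<bar>x\<bar> \<le> \<bar>R\<bar> + h \<Longrightarrow> \<bar>y\<bar> \<le> \<bar>R\<bar> + h \<Longrightarrow>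
      \<bar>x - y\<bar> < \<delta> \<Longrightarrow> \<bar>g x - g y\<bar> < \<epsilon> / (2 * h)"
    using continuous_imp_uniformly_continuous_on_interval[OF cont, of "\<epsilon> / (2 * h)"] \<epsilon> h by auto
  define N :: nat where "N = nat \<lceil>h / \<delta>\<rceil> + 1"
  have N: "N > 0" unfolding N_def by simp
  have "real N > h / \<delta>" unfolding N_def by linarith
  then have mesh: "h / N < \<delta>" using \<delta>(1) N by (simp add: field_simps)
  have bound: "\<bar>G (t + h) - G t - (\<Sum>i<N. h / N * g (t + i * h / N))\<bar> \<le> h * (\<epsilon> / (2 * h))"
    if t: "\<bar>t\<bar> \<le> R" for t
  proof (rule riemann_sum_error[OF der _ N])
    fix i z assume i: "i < N" and z: "t + i * h / N \<le> z" "z \<le> t + (i + 1) * h / N"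
    define s where "s = i * h / N"
    have "h * (i + 1) \<le> h * N" using i h by (intro mult_left_mono) auto
    then have "s + h / N \<le> h" using N unfolding s_def by (simp add: field_simps)
    moreover have "0 \<le> s" using h unfolding s_def by simp
    moreover have "t + s \<le> z" "z \<le> t + s + h / N"
      using z unfolding s_def by (simp_all add: add_divide_distrib distrib_right)
    moreover have "- R \<le> t" "t \<le> R" "R \<le> \<bar>R\<bar>" using t by auto
    ultimately have "\<bar>z\<bar> \<le> \<bar>R\<bar> + h" "\<bar>t + s\<bar> \<le> \<bar>R\<bar> + h" "\<bar>z - (t + s)\<bar> < \<delta>"
      using mesh by (simp_all add: abs_le_iff)
    then show "\<bar>g z - g (t + i * h / N)\<bar> \<le> \<epsilon> / (2 * h)"
      using \<delta>(2) less_imp_le unfolding s_def by blast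
  qed (use h in auto)
  have "h * (\<epsilon> / (2 * h)) < \<epsilon>" using h \<epsilon> by simp
  then show thesis using that[of N] bound by (meson le_less_trans)
qed

definition forward_diff :: "real \<Rightarrow> (real \<Rightarrow> real) \<Rightarrow> real \<Rightarrow> real" where
  "forward_diff h g = (\<lambda>t. g (t + h) - g t)"

lemma forward_diff_apply: "forward_diff h g t = g (t + h) - g t"
  by (simp add: forward_diff_def)

lemma forward_diff_pow_Suc:
  "(forward_diff h ^^ Suc j) g = (\<lambda>t. (forward_diff h ^^ j) g (t + h) - (forward_diff h ^^ j) g t)"
  by (simp add: fun_eq_iff forward_diff_apply)

lemma forward_diff_in_net_closure:
  assumes g: "g \<in> net_closure \<sigma>" "continuous_on UNIV g"
    and der: "\<And>x. DERIV G x :> g x" and h: "h > 0"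
  shows "forward_diff h G \<in> net_closure \<sigma>"
proof (rule locally_uniform_closure_closed, rule locally_uniform_closure_realI)
  fix R \<epsilon> :: real assume "\<epsilon> > 0"
  then obtain N :: nat where
    N: "\<And>t. \<bar>t\<bar> \<le> R \<Longrightarrow> \<bar>G (t + h) - G t - (\<Sum>i<N. h / N * g (t + i * h / N))\<bar> < \<epsilon>"
    using riemann_sum_approximates_increment[OF g(2) der h] by blast
  have "(\<lambda>t. \<Sum>i<N. h / N * g (1 * t + i * h / N)) \<in> net_closure \<sigma>"
    by (intro net_closure_sum net_closure_scale net_closure_affine[OF g(1)])
  then show "\<exists>f\<in>net_closure \<sigma>. \<forall>t. \<bar>t\<bar> \<le> R \<longrightarrow> \<bar>forward_diff h G t - f t\<bar> < \<epsilon>"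
    using N by (intro bexI) (auto simp: forward_diff_apply)
qed

lemma has_real_derivative_forward_diff_pow:
  assumes "\<And>x. DERIV g x :> g' x"
  shows "DERIV ((forward_diff h ^^ j) g) x :> (forward_diff h ^^ j) g' x"
proof (induction j arbitrary: x)
  case 0
  then show ?case using assms by simp
next
  case (Suc j)
  then have "DERIV (\<lambda>t. (forward_diff h ^^ j) g (t + h) - (forward_diff h ^^ j) g t) x
      :> (forward_diff h ^^ j) g' (x + h) - (forward_diff h ^^ j) g' x"
    by (intro DERIV_diff DERIV_shift[THEN iffD1])
  then show ?case by (simp only: forward_diff_pow_Suc)
qed

lemma continuous_on_forward_diff_pow:
  assumes "continuous_on UNIV g"
  shows "continuous_on UNIV ((forward_diff h ^^ j) g)"
proof (induction j)
  case 0
  then show ?case using assms by simp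
next
  case (Suc j)
  then have "continuous_on UNIV (\<lambda>t. (forward_diff h ^^ j) g (t + h) - (forward_diff h ^^ j) g t)"
    by (intro continuous_on_diff continuous_on_compose2[OF Suc]) (auto intro: continuous_intros)
  then show ?case by (simp only: forward_diff_pow_Suc)
qed

lemma continuous_imp_has_antiderivative:
  fixes g :: "real \<Rightarrow> real"
  assumes "continuous_on UNIV g"
  shows "\<exists>G. \<forall>x. DERIV G x :> g x"
proof (intro exI allI)
  fix x :: real
  define a b where "a = - \<bar>x\<bar> - 1" and "b = \<bar>x\<bar> + 1"
  have ab: "a \<le> 0" "0 \<le> b" "a \<le> x" "x \<le> b" unfolding a_def b_def by auto
  have "((\<lambda>u. LBINT y=ereal 0..ereal u. g y) has_vector_derivative g x) (at x within {a..b})"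
    using interval_integral_FTC2[OF ab(1,2) continuous_on_subset[OF assms] ab(3,4)] by simp
  moreover have "at x within {a..b} = at x"
    by (rule at_within_interior) (auto simp: a_def b_def)
  ultimately show "DERIV (\<lambda>u. LBINT y=ereal 0..ereal u. g y) x :> g x"
    by (simp add: has_real_derivative_iff_has_vector_derivative)
qed

definition antiderivative :: "(real \<Rightarrow> real) \<Rightarrow> real \<Rightarrow> real" where
  "antiderivative g = (SOME G. \<forall>x. DERIV G x :> g x)"

lemma has_real_derivative_antiderivative:
  assumes "continuous_on UNIV g"
  shows "DERIV (antiderivative g) x :> g x"
proof -
  have "\<forall>x. DERIV (antiderivative g) x :> g x"
    unfolding antiderivative_def by (rule someI_ex[OF continuous_imp_has_antiderivative[OF assms]])
  then show ?thesis ..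
qed

lemma continuous_on_antiderivative_pow:
  assumes "continuous_on UNIV \<sigma>"
  shows "continuous_on UNIV ((antiderivative ^^ i) \<sigma>)"
proof (induction i)
  case 0
  then show ?case using assms by simp
next
  case (Suc i)
  have "DERIV ((antiderivative ^^ Suc i) \<sigma>) x :> (antiderivative ^^ i) \<sigma> x" for x
    using has_real_derivative_antiderivative[OF Suc] by simp
  then show ?case by (meson DERIV_isCont continuous_at_imp_continuous_on)
qed

lemma has_real_derivative_antiderivative_pow:
  "continuous_on UNIV \<sigma> \<Longrightarrow> DERIV ((antiderivative ^^ Suc i) \<sigma>) x :> (antiderivative ^^ i) \<sigma> x"
  by (simp add: has_real_derivative_antiderivative continuous_on_antiderivative_pow)

lemma forward_diff_pow_antiderivative_in_net_closure:
  assumes cont: "continuous_on UNIV \<sigma>" and h: "h > 0"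
  shows "(forward_diff h ^^ j) ((antiderivative ^^ j) \<sigma>) \<in> net_closure \<sigma>"
proof (induction j)
  case 0
  show ?case using activation_in_net_closure by simp
next
  case (Suc j)
  have "forward_diff h ((forward_diff h ^^ j) ((antiderivative ^^ Suc j) \<sigma>)) \<in> net_closure \<sigma>"
    using Suc continuous_on_forward_diff_pow continuous_on_antiderivative_pow[OF cont]
      has_real_derivative_forward_diff_pow has_real_derivative_antiderivative_pow[OF cont] h
    by (intro forward_diff_in_net_closure) auto
  then show ?case by simp
qed

lemma forward_diff_pow_mean_value:
  assumes cont: "continuous_on UNIV \<sigma>" and h: "h > 0"
  shows "\<exists>\<xi>. t \<le> \<xi> \<and> \<xi> \<le> t + j * h \<and>
    (forward_diff h ^^ j) ((antiderivative ^^ (i + j)) \<sigma>) t = h ^ j * (antiderivative ^^ i) \<sigma> \<xi>"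
proof (induction j arbitrary: t)
  case 0
  then show ?case by auto
next
  case (Suc j)
  let ?F = "(forward_diff h ^^ j) ((antiderivative ^^ Suc (i + j)) \<sigma>)"
  have der: "DERIV ?F x :> (forward_diff h ^^ j) ((antiderivative ^^ (i + j)) \<sigma>) x" for x
    by (intro has_real_derivative_forward_diff_pow has_real_derivative_antiderivative_pow cont)
  obtain z where z: "t \<le> z" "z \<le> t + h"
    "?F (t + h) - ?F t = (t + h - t) * (forward_diff h ^^ j) ((antiderivative ^^ (i + j)) \<sigma>) z"
    using MVT_between[OF der, of t "t + h"] h by auto
  obtain \<xi> where \<xi>: "z \<le> \<xi>" "\<xi> \<le> z + j * h"
    "(forward_diff h ^^ j) ((antiderivative ^^ (i + j)) \<sigma>) z = h ^ j * (antiderivative ^^ i) \<sigma> \<xi>"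
    using Suc by blast
  have "(forward_diff h ^^ Suc j) ((antiderivative ^^ (i + Suc j)) \<sigma>) t = ?F (t + h) - ?F t"
    by (simp add: forward_diff_apply)
  also have "\<dots> = h ^ Suc j * (antiderivative ^^ i) \<sigma> \<xi>" using z(3) \<xi>(3) by simp
  finally show ?case using z \<xi> by (intro exI[of _ \<xi>]) (auto simp: algebra_simps)
qed

lemma forward_diff_pow_antiderivative_tendsto:
  assumes cont: "continuous_on UNIV \<sigma>" and pos: "\<And>n. h n > 0" and lim: "h \<longlonglongrightarrow> 0"
  shows "(\<lambda>n. (forward_diff (h n) ^^ k) ((antiderivative ^^ k) \<sigma>) t / h n ^ k) \<longlonglongrightarrow> \<sigma> t"
proof -
  have "\<exists>\<xi>. t \<le> \<xi> \<and> \<xi> \<le> t + k * h n \<and>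
      (forward_diff (h n) ^^ k) ((antiderivative ^^ k) \<sigma>) t = h n ^ k * \<sigma> \<xi>" for n
    using forward_diff_pow_mean_value[OF cont pos, where i = 0 and j = k and t = t] by simp
  then obtain \<xi> where \<xi>: "\<And>n. t \<le> \<xi> n" "\<And>n. \<xi> n \<le> t + k * h n"
    "\<And>n. (forward_diff (h n) ^^ k) ((antiderivative ^^ k) \<sigma>) t = h n ^ k * \<sigma> (\<xi> n)"
    by metis
  have "\<xi> \<longlonglongrightarrow> t"
  proof (rule tendsto_sandwich[of "\<lambda>n. t" _ _ "\<lambda>n. t + k * h n"])
    show "(\<lambda>n. t + k * h n) \<longlonglongrightarrow> t"
      using tendsto_add[OF tendsto_const tendsto_mult[OF tendsto_const lim]] by simp
  qed (use \<xi> in auto)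
  then have "(\<lambda>n. \<sigma> (\<xi> n)) \<longlonglongrightarrow> \<sigma> t"
    using cont by (simp add: continuous_on_eq_continuous_at isCont_tendsto_compose)
  moreover have "(forward_diff (h n) ^^ k) ((antiderivative ^^ k) \<sigma>) t / h n ^ k = \<sigma> (\<xi> n)" for n
    using \<xi>(3)[of n] pos[of n] by simp
  ultimately show ?thesis by simp
qed

section \<open>Monomials and the exponential in one variable\<close>

lemma difference_quotient_error:
  fixes \<phi> \<phi>' :: "real \<Rightarrow> real"
  assumes der: "\<And>x. DERIV \<phi> x :> \<phi>' x" and \<eta>: "\<eta> > 0"
    and close: "\<And>z. \<bar>z - x\<bar> \<le> \<eta> * \<bar>t\<bar> \<Longrightarrow> \<bar>\<phi>' x - \<phi>' z\<bar> \<le> e"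
  shows "\<bar>t ^ Suc j * \<phi>' x - t ^ j * (\<phi> (x + \<eta> * t) - \<phi> x) / \<eta>\<bar> \<le> \<bar>t\<bar> ^ Suc j * e"
proof -
  obtain z where z: "min x (x + \<eta> * t) \<le> z" "z \<le> max x (x + \<eta> * t)"
    "\<phi> (x + \<eta> * t) - \<phi> x = (x + \<eta> * t - x) * \<phi>' z"
    using MVT_between[OF der] by blast
  from z(1,2) have "\<bar>z - x\<bar> \<le> \<bar>\<eta> * t\<bar>"
    by (cases "0 \<le> \<eta> * t") (auto simp: min_def max_def)
  then have "\<bar>z - x\<bar> \<le> \<eta> * \<bar>t\<bar>" using \<eta> by (simp add: abs_mult)
  then have "\<bar>\<phi>' x - \<phi>' z\<bar> \<le> e" by (rule close)
  have "t ^ j * (\<phi> (x + \<eta> * t) - \<phi> x) / \<eta> = t ^ Suc j * \<phi>' z"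
    using \<eta> unfolding z(3) by simp
  then have "\<bar>t ^ Suc j * \<phi>' x - t ^ j * (\<phi> (x + \<eta> * t) - \<phi> x) / \<eta>\<bar> = \<bar>t\<bar> ^ Suc j * \<bar>\<phi>' x - \<phi>' z\<bar>"
    by (simp add: abs_mult power_abs right_diff_distrib[symmetric])
  also have "\<dots> \<le> \<bar>t\<bar> ^ Suc j * e"
    using \<open>\<bar>\<phi>' x - \<phi>' z\<bar> \<le> e\<close> by (intro mult_left_mono) auto
  finally show ?thesis .
qed

lemma difference_quotient_in_weight_approx:
  fixes \<phi> \<phi>' :: "real \<Rightarrow> real"
  assumes der: "\<And>x. DERIV \<phi> x :> \<phi>' x" and cont: "continuous_on UNIV \<phi>'" and \<epsilon>: "\<epsilon> > 0"
  obtains \<eta> where "\<eta> > 0"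
    "\<And>t. \<bar>t\<bar> \<le> R \<Longrightarrow>
       \<bar>t ^ Suc j * \<phi>' (w * t + b) - t ^ j * (\<phi> ((w + \<eta>) * t + b) - \<phi> (w * t + b)) / \<eta>\<bar> < \<epsilon>"
proof -
  define M where "M = \<bar>R\<bar>"
  define \<epsilon>' where "\<epsilon>' = \<epsilon> / (M ^ Suc j + 1)"
  have M: "M \<ge> 0" "M ^ Suc j \<ge> 0" unfolding M_def by simp_all
  then have \<epsilon>': "\<epsilon>' > 0" using \<epsilon> unfolding \<epsilon>'_def by (simp add: add_nonneg_pos)
  obtain \<delta> where \<delta>: "\<delta> > 0" "\<And>x y. \<bar>x\<bar> \<le> \<bar>w\<bar> * M + \<bar>b\<bar> + 1 \<Longrightarrow> \<bar>y\<bar> \<le> \<bar>w\<bar> * M + \<bar>b\<bar> + 1 \<Longrightarrow>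
      \<bar>x - y\<bar> < \<delta> \<Longrightarrow> \<bar>\<phi>' x - \<phi>' y\<bar> < \<epsilon>'"
    using continuous_imp_uniformly_continuous_on_interval[OF cont \<epsilon>'] by blast
  define \<eta> where "\<eta> = min \<delta> 1 / (M + 1)"
  have \<eta>: "\<eta> > 0" "\<eta> * (M + 1) = min \<delta> 1" using \<delta>(1) M unfolding \<eta>_def by simp_all
  have "\<bar>t ^ Suc j * \<phi>' x - t ^ j * (\<phi> (x + \<eta> * t) - \<phi> x) / \<eta>\<bar> < \<epsilon>"
    if t: "\<bar>t\<bar> \<le> R" and x: "x = w * t + b" for t x
  proof -
    have tM: "\<bar>t\<bar> \<le> M" using t unfolding M_def by simp
    have "\<eta> * \<bar>t\<bar> \<le> \<eta> * M" using tM \<eta>(1) by (simp add: mult_left_mono)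
    also have "\<dots> < min \<delta> 1" using \<eta> by (simp add: distrib_left flip: \<eta>(2))
    finally have step: "\<eta> * \<bar>t\<bar> < min \<delta> 1" .
    have "\<bar>w * t\<bar> \<le> \<bar>w\<bar> * M" using tM by (simp add: abs_mult mult_left_mono)
    then have x_bound: "\<bar>x\<bar> \<le> \<bar>w\<bar> * M + \<bar>b\<bar>"
      using abs_triangle_ineq[of "w * t" b] unfolding x by linarith
    have "\<bar>\<phi>' x - \<phi>' z\<bar> \<le> \<epsilon>'" if "\<bar>z - x\<bar> \<le> \<eta> * \<bar>t\<bar>" for z
    proof -
      have "\<bar>z - x\<bar> < min \<delta> 1" using that step by linarith
      moreover have "\<bar>z\<bar> \<le> \<bar>x\<bar> + \<bar>z - x\<bar>" using abs_triangle_ineq[of x "z - x"] by simp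
      ultimately show ?thesis
        using x_bound \<delta>(2)[of x z] by (simp add: abs_minus_commute)
    qed
    then have "\<bar>t ^ Suc j * \<phi>' x - t ^ j * (\<phi> (x + \<eta> * t) - \<phi> x) / \<eta>\<bar> \<le> \<bar>t\<bar> ^ Suc j * \<epsilon>'"
      by (rule difference_quotient_error[OF der \<eta>(1)])
    also have "\<dots> \<le> M ^ Suc j * \<epsilon>'"
      using tM \<epsilon>' by (intro mult_right_mono power_mono) auto
    also have "\<dots> = \<epsilon> * (M ^ Suc j / (M ^ Suc j + 1))" unfolding \<epsilon>'_def by simp
    also have "\<dots> < \<epsilon> * 1"
      using \<epsilon> M(2) by (intro mult_strict_left_mono) (simp_all add: divide_less_eq)
    finally show ?thesis by simp
  qed
  then show thesis using that \<eta>(1) by (simp add: algebra_simps)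
qed

text \<open>\<open>t\<^sup>j\<^sup>+\<^sup>1 \<phi>'(w t + b)\<close> is the derivative in the weight \<open>w\<close> of \<open>t\<^sup>j \<phi>(w t + b)\<close>, hence a locally
  uniform limit of difference quotients in \<open>w\<close>.\<close>

lemma power_times_derivative_in_net_closure_step:
  assumes der: "\<And>x. DERIV \<phi> x :> \<phi>' x" and cont: "continuous_on UNIV \<phi>'"
    and in_closure: "\<And>w. (\<lambda>t. t ^ j * \<phi> (w * t + b)) \<in> net_closure \<sigma>"
  shows "(\<lambda>t. t ^ Suc j * \<phi>' (w * t + b)) \<in> net_closure \<sigma>"
proof (rule locally_uniform_closure_closed, rule locally_uniform_closure_realI)
  fix R \<epsilon> :: real assume "\<epsilon> > 0"
  then obtain \<eta> where "\<eta> > 0" and \<eta>: "\<And>t. \<bar>t\<bar> \<le> R \<Longrightarrow>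
      \<bar>t ^ Suc j * \<phi>' (w * t + b) - t ^ j * (\<phi> ((w + \<eta>) * t + b) - \<phi> (w * t + b)) / \<eta>\<bar> < \<epsilon>"
    using difference_quotient_in_weight_approx[OF der cont] by blast
  have "(\<lambda>t. 1 / \<eta> * (t ^ j * \<phi> ((w + \<eta>) * t + b)) - 1 / \<eta> * (t ^ j * \<phi> (w * t + b))) \<in> net_closure \<sigma>"
    by (intro net_closure_diff net_closure_scale in_closure)
  then show "\<exists>f\<in>net_closure \<sigma>. \<forall>t. \<bar>t\<bar> \<le> R \<longrightarrow> \<bar>t ^ Suc j * \<phi>' (w * t + b) - f t\<bar> < \<epsilon>"
    using \<eta> by (intro bexI) (auto simp: right_diff_distrib diff_divide_distrib)
qed

lemma power_times_derivative_in_net_closure: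
  assumes der: "\<And>i x. i < k \<Longrightarrow> DERIV (D i) x :> D (Suc i) x"
    and cont: "\<And>i. i \<le> k \<Longrightarrow> continuous_on UNIV (D i)"
    and D0: "D 0 \<in> net_closure \<sigma>"
  shows "(\<lambda>t. t ^ k * D k (w * t + b)) \<in> net_closure \<sigma>"
proof -
  have "\<forall>w. (\<lambda>t. t ^ i * D i (w * t + b)) \<in> net_closure \<sigma>" if "i \<le> k" for i
    using that
  proof (induction i)
    case 0
    then show ?case using net_closure_affine[OF D0] by simp
  next
    case (Suc i)
    then show ?case
      using power_times_derivative_in_net_closure_step[of "D i" "D (Suc i)"] der cont by simp
  qed
  then show ?thesis by blast
qed

lemma monomial_in_net_closure_if_forward_diff_nonzero:
  assumes cont: "continuous_on UNIV \<sigma>" and h: "h > 0" and nz: "(forward_diff h ^^ k) \<sigma> b \<noteq> 0"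
  shows "(\<lambda>t. t ^ k) \<in> net_closure \<sigma>"
proof -
  define D where "D i = (forward_diff h ^^ k) ((antiderivative ^^ (k - i)) \<sigma>)" for i
  have "DERIV (D i) x :> D (Suc i) x" if "i < k" for i x
  proof -
    have "k - i = Suc (k - Suc i)" using that by simp
    then show ?thesis unfolding D_def
      by (metis has_real_derivative_forward_diff_pow has_real_derivative_antiderivative_pow[OF cont])
  qed
  moreover have "continuous_on UNIV (D i)" for i
    unfolding D_def by (intro continuous_on_forward_diff_pow continuous_on_antiderivative_pow cont)
  moreover have "D 0 \<in> net_closure \<sigma>"
    unfolding D_def using forward_diff_pow_antiderivative_in_net_closure[OF cont h] by simp
  ultimately have "(\<lambda>t. t ^ k * D k (0 * t + b)) \<in> net_closure \<sigma>"
    by (intro power_times_derivative_in_net_closure)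
  then have "(\<lambda>t. 1 / D k b * (t ^ k * D k (0 * t + b))) \<in> net_closure \<sigma>"
    by (rule net_closure_scale)
  moreover have "D k = (forward_diff h ^^ k) \<sigma>" unfolding D_def by simp
  ultimately show ?thesis using nz by simp
qed

definition lagrange_basis :: "nat \<Rightarrow> nat \<Rightarrow> real poly" where
  "lagrange_basis k i =
     smult (1 / (\<Prod>j\<in>{..k} - {i}. real i - real j)) (\<Prod>j\<in>{..k} - {i}. [:- real j, 1:])"

lemma degree_lagrange_basis: "i \<le> k \<Longrightarrow> degree (lagrange_basis k i) \<le> k"
proof -
  assume "i \<le> k"
  have "degree (\<Prod>j\<in>{..k} - {i}. [:- real j, 1:]) \<le> (\<Sum>j\<in>{..k} - {i}. degree [:- real j, 1:])"
    using degree_prod_sum_le[of "{..k} - {i}" "\<lambda>j. [:- real j, 1:]"] by (simp add: o_def)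
  also have "\<dots> = card ({..k} - {i})" by simp
  also have "\<dots> \<le> k" using \<open>i \<le> k\<close> by (simp add: card_Diff_singleton)
  finally show ?thesis unfolding lagrange_basis_def using degree_smult_le order_trans by blast
qed

lemma poly_lagrange_basis: "l \<le> k \<Longrightarrow> poly (lagrange_basis k i) (real l) = (if l = i then 1 else 0)"
  by (auto simp: lagrange_basis_def poly_prod prod_zero_iff)

lemma lagrange_interpolation:
  fixes q :: "real poly"
  assumes "degree q \<le> k"
  shows "q = (\<Sum>i\<le>k. smult (poly q (real i)) (lagrange_basis k i))"
proof (rule poly_eqI_degree[where A = "real ` {..k}"])
  fix x assume "x \<in> real ` {..k}"
  then obtain l where "l \<le> k" "x = real l" by auto
  then show "poly q x = poly (\<Sum>i\<le>k. smult (poly q (real i)) (lagrange_basis k i)) x"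
    by (simp add: poly_sum poly_lagrange_basis if_distrib cong: if_cong)
next
  have card: "card (real ` {..k}) = Suc k" by (simp add: card_image)
  then show "degree q < card (real ` {..k})" using assms by simp
  have "degree (\<Sum>i\<le>k. smult (poly q (real i)) (lagrange_basis k i)) \<le> k"
    by (intro degree_sum_le) (auto intro!: order_trans[OF degree_smult_le] degree_lagrange_basis)
  then show "degree (\<Sum>i\<le>k. smult (poly q (real i)) (lagrange_basis k i)) < card (real ` {..k})"
    using card by simp
qed

lemma is_polynomial_fun_pointwise_limit:
  fixes q :: "nat \<Rightarrow> real poly"
  assumes deg: "\<And>n. degree (q n) \<le> k" and lim: "\<And>t. (\<lambda>n. poly (q n) t) \<longlonglongrightarrow> f t"
  shows "is_polynomial_fun f"
proof -
  have "f t = poly (\<Sum>i\<le>k. smult (f (real i)) (lagrange_basis k i)) t" for t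
  proof -
    have "(\<lambda>n. \<Sum>i\<le>k. poly (q n) (real i) * poly (lagrange_basis k i) t)
        \<longlonglongrightarrow> (\<Sum>i\<le>k. f (real i) * poly (lagrange_basis k i) t)"
      by (intro tendsto_intros lim)
    moreover have "poly (q n) t = (\<Sum>i\<le>k. poly (q n) (real i) * poly (lagrange_basis k i) t)" for n
      by (subst lagrange_interpolation[OF deg[of n]]) (simp add: poly_sum)
    ultimately have "(\<lambda>n. poly (q n) t) \<longlonglongrightarrow> poly (\<Sum>i\<le>k. smult (f (real i)) (lagrange_basis k i)) t"
      by (simp add: poly_sum)
    then show ?thesis using lim LIMSEQ_unique by blast
  qed
  then show ?thesis unfolding is_polynomial_fun_def by blast
qed

lemma pderiv_surj_degree:
  fixes p :: "real poly"
  obtains P where "degree P \<le> Suc (degree p)" "pderiv P = p"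
proof
  let ?P = "\<Sum>i\<le>degree p. monom (coeff p i / real (Suc i)) (Suc i)"
  show "degree ?P \<le> Suc (degree p)"
    by (intro degree_sum_le) (auto intro: order_trans[OF degree_monom_le])
  have "pderiv ?P = (\<Sum>i\<le>degree p. pderiv (monom (coeff p i / real (Suc i)) (Suc i)))"
    using higher_pderiv_sum[of 1] by simp
  also have "\<dots> = (\<Sum>i\<le>degree p. monom (coeff p i) i)" by (simp add: pderiv_monom)
  finally show "pderiv ?P = p" by (simp add: poly_as_sum_of_monoms)
qed

lemma has_real_derivative_poly_imp_poly:
  fixes f :: "real \<Rightarrow> real"
  assumes "\<And>x. DERIV f x :> poly p x"
  obtains P where "degree P \<le> Suc (degree p)" "f = poly P"
proof -
  obtain P where P: "degree P \<le> Suc (degree p)" "pderiv P = p" by (rule pderiv_surj_degree)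
  have "\<forall>x. DERIV (\<lambda>x. f x - poly P x) x :> 0"
    using assms P(2) by (auto intro!: derivative_eq_intros)
  then have const: "f x - poly P x = f 0 - poly P 0" for x by (rule DERIV_isconst_all)
  show thesis
  proof
    show "f = poly (P + [:f 0 - poly P 0:])" using const by (auto simp: algebra_simps)
    show "degree (P + [:f 0 - poly P 0:]) \<le> Suc (degree p)"
      using P(1) degree_add_le[of P "Suc (degree p)" "[:f 0 - poly P 0:]"] by simp
  qed
qed

lemma forward_diff_pow_antiderivative_poly:
  assumes cont: "continuous_on UNIV \<sigma>" and zero: "\<And>t. (forward_diff h ^^ k) \<sigma> t = 0" and "i \<le> k"
  shows "\<exists>p. degree p \<le> i \<and> (forward_diff h ^^ k) ((antiderivative ^^ i) \<sigma>) = poly p"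
  using \<open>i \<le> k\<close>
proof (induction i)
  case 0
  then show ?case using zero by (intro exI[of _ 0]) auto
next
  case (Suc i)
  then obtain p where p: "degree p \<le> i" "(forward_diff h ^^ k) ((antiderivative ^^ i) \<sigma>) = poly p"
    by auto
  have "DERIV ((forward_diff h ^^ k) ((antiderivative ^^ Suc i) \<sigma>)) x :> poly p x" for x
    unfolding p(2)[symmetric]
    by (intro has_real_derivative_forward_diff_pow has_real_derivative_antiderivative_pow cont)
  then obtain P where "degree P \<le> Suc (degree p)"
    "(forward_diff h ^^ k) ((antiderivative ^^ Suc i) \<sigma>) = poly P"
    by (rule has_real_derivative_poly_imp_poly)
  then show ?case using p(1) by (intro exI[of _ P]) auto
qed

lemma nonpolynomial_forward_diff_nonzero:
  assumes cont: "continuous_on UNIV \<sigma>" and nonpoly: "\<not> is_polynomial_fun \<sigma>"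
  shows "\<exists>h>0. \<exists>b. (forward_diff h ^^ k) \<sigma> b \<noteq> 0"
proof (rule ccontr)
  assume "\<not> (\<exists>h>0. \<exists>b. (forward_diff h ^^ k) \<sigma> b \<noteq> 0)"
  then have zero: "\<And>h t. h > 0 \<Longrightarrow> (forward_diff h ^^ k) \<sigma> t = 0" by blast
  define h where "h n = inverse (real (Suc n))" for n
  have h_pos: "h n > 0" for n unfolding h_def by simp
  have h_lim: "h \<longlonglongrightarrow> 0" unfolding h_def by (rule LIMSEQ_inverse_real_of_nat)
  obtain P where P: "\<And>n. degree (P n) \<le> k"
    "\<And>n. (forward_diff (h n) ^^ k) ((antiderivative ^^ k) \<sigma>) = poly (P n)"
    using forward_diff_pow_antiderivative_poly[OF cont zero[OF h_pos] order_refl] by metis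
  define q where "q n = smult (1 / h n ^ k) (P n)" for n
  have "degree (q n) \<le> k" for n
    unfolding q_def using P(1)[of n] degree_smult_le order_trans by blast
  moreover have "(\<lambda>n. poly (q n) t) \<longlonglongrightarrow> \<sigma> t" for t
    using forward_diff_pow_antiderivative_tendsto[OF cont h_pos h_lim, of k t]
    by (simp add: q_def P(2))
  ultimately show False using is_polynomial_fun_pointwise_limit nonpoly by blast
qed

lemma monomial_in_net_closure:
  assumes "continuous_on UNIV \<sigma>" "\<not> is_polynomial_fun \<sigma>"
  shows "(\<lambda>t. t ^ k) \<in> net_closure \<sigma>"
  using nonpolynomial_forward_diff_nonzero[OF assms]
    monomial_in_net_closure_if_forward_diff_nonzero[OF assms(1)]
  by blast

lemma exp_in_net_closure:
  assumes "continuous_on UNIV \<sigma>" "\<not> is_polynomial_fun \<sigma>"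
  shows "exp \<in> net_closure \<sigma>"
proof (rule locally_uniform_closure_closed, rule locally_uniform_closure_realI)
  fix R \<epsilon> :: real assume "\<epsilon> > 0"
  then obtain g where g: "real_polynomial_function g" "\<And>t. t \<in> {-R..R} \<Longrightarrow> \<bar>exp t - g t\<bar> < \<epsilon>"
    using Stone_Weierstrass_real_polynomial_function[of "{-R..R}" exp]
      continuous_on_exp[OF continuous_on_id]
    by auto
  obtain a n where "g = (\<lambda>t. \<Sum>i\<le>n. a i * t ^ i)" using g(1) real_polynomial_function_iff_sum by auto
  then have "g \<in> net_closure \<sigma>"
    by (simp add: net_closure_sum net_closure_scale monomial_in_net_closure[OF assms])
  with g(2) show "\<exists>h\<in>net_closure \<sigma>. \<forall>t. \<bar>t\<bar> \<le> R \<longrightarrow> \<bar>exp t - h t\<bar> < \<epsilon>"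
    by (intro bexI[of _ g]) (auto simp: abs_le_iff)
qed

section \<open>Density in several variables\<close>

definition exp_sums :: "('a::real_inner \<Rightarrow> real) set" where
  "exp_sums = fun_space.span (range (\<lambda>w x. exp (w \<bullet> x)))"

lemma subspace_exp_sums: "fun_space.subspace exp_sums"
  unfolding exp_sums_def by simp

lemma exp_in_exp_sums: "(\<lambda>x. exp (w \<bullet> x)) \<in> exp_sums"
  unfolding exp_sums_def by (rule fun_space.span_base) auto

lemma exp_times_exp_sums:
  assumes "g \<in> exp_sums"
  shows "(\<lambda>x. exp (v \<bullet> x) * g x) \<in> exp_sums"
  using assms unfolding exp_sums_def
proof (induction rule: fun_space.span_induct)
  case base
  show ?case by (rule subspace_multiplier_preimage[OF subspace_exp_sums[unfolded exp_sums_def]])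
next
  case (step h)
  then obtain w where "h = (\<lambda>x. exp (w \<bullet> x))" by auto
  then show ?case
    using exp_in_exp_sums[of "v + w"] by (simp add: exp_sums_def inner_add_left exp_add)
qed

lemma exp_sums_mult:
  assumes "f \<in> exp_sums" "g \<in> exp_sums"
  shows "(\<lambda>x. f x * g x) \<in> exp_sums"
  using assms(1) unfolding exp_sums_def
proof (induction rule: fun_space.span_induct)
  case base
  show ?case
    using subspace_multiplier_preimage[OF subspace_exp_sums, of g]
    by (simp add: exp_sums_def mult.commute)
next
  case (step h)
  then show ?case using exp_times_exp_sums[OF assms(2)] by (auto simp: exp_sums_def)
qed

lemma continuous_on_exp_sums: "f \<in> exp_sums \<Longrightarrow> continuous_on UNIV f"
  unfolding exp_sums_def
proof (induction rule: fun_space.span_induct)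
  case base
  show ?case
    by (auto simp: fun_space.subspace_def zero_fun_def plus_fun_def intro: continuous_intros)
next
  case (step f)
  then show ?case by (auto intro!: continuous_intros)
qed

lemma exp_sums_subset_net_closure:
  assumes "continuous_on UNIV \<sigma>" "\<not> is_polynomial_fun \<sigma>"
  shows "exp_sums \<subseteq> net_closure \<sigma>"
  unfolding exp_sums_def
proof (rule fun_space.span_minimal[OF _ subspace_net_closure], clarify)
  fix w
  show "(\<lambda>x. exp (w \<bullet> x)) \<in> net_closure \<sigma>"
    using net_closure_compose_affine[OF exp_in_net_closure[OF assms], of w 0] by simp
qed

theorem continuous_in_net_closure:
  fixes f :: "'a::real_inner \<Rightarrow> real"
  assumes "continuous_on UNIV \<sigma>" "\<not> is_polynomial_fun \<sigma>" and f: "continuous_on UNIV f"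
  shows "f \<in> net_closure \<sigma>"
proof (rule locally_uniform_closure_closed, rule locally_uniform_closureI)
  fix K :: "'a set" and \<epsilon> :: real assume "compact K" "\<epsilon> > 0"
  have "\<exists>g. g \<in> exp_sums \<and> (\<forall>x\<in>K. \<bar>f x - g x\<bar> < \<epsilon>)"
  proof (rule Stone_Weierstrass_HOL[OF \<open>compact K\<close>])
    fix c :: real
    show "(\<lambda>x. c) \<in> exp_sums"
      using fun_space.subspace_scale[OF subspace_exp_sums exp_in_exp_sums[of 0], of c] by simp
  next
    fix x y :: 'a assume "x \<in> K \<and> y \<in> K \<and> x \<noteq> y"
    then have "(x - y) \<bullet> x - (x - y) \<bullet> y > 0" by (simp add: inner_diff_right[symmetric])
    then have "(x - y) \<bullet> x \<noteq> (x - y) \<bullet> y" by linarith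
    then show "\<exists>g. g \<in> exp_sums \<and> g x \<noteq> g y"
      using exp_in_exp_sums[of "x - y"] by auto
  next
    fix g :: "'a \<Rightarrow> real" assume "g \<in> exp_sums"
    then show "continuous_on K g" using continuous_on_exp_sums continuous_on_subset by blast
  next
    fix g h :: "'a \<Rightarrow> real" assume "g \<in> exp_sums \<and> h \<in> exp_sums"
    then show "(\<lambda>x. g x + h x) \<in> exp_sums" "(\<lambda>x. g x * h x) \<in> exp_sums"
      using fun_space.subspace_add[OF subspace_exp_sums, of g h] exp_sums_mult
      by (auto simp: plus_fun_def)
  qed (use continuous_on_subset[OF f] \<open>\<epsilon> > 0\<close> in auto)
  then show "\<exists>h\<in>net_closure \<sigma>. \<forall>x\<in>K. \<bar>f x - h x\<bar> < \<epsilon>"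
    using exp_sums_subset_net_closure[OF assms(1,2)] by blast
qed

section \<open>Kernel expansions of ridge networks\<close>

definition inner_upto :: "nat \<Rightarrow> (nat \<Rightarrow> real) \<Rightarrow> (nat \<Rightarrow> real) \<Rightarrow> real" where
  "inner_upto m u v = (\<Sum>j<m. u j * v j)"

lemma inner_upto_commute: "inner_upto m u v = inner_upto m v u"
  unfolding inner_upto_def by (simp add: mult.commute)

lemma inner_upto_add_left: "inner_upto m (\<lambda>j. u j + u' j) v = inner_upto m u v + inner_upto m u' v"
  unfolding inner_upto_def by (simp add: distrib_right sum.distrib)

lemma inner_upto_diff_left: "inner_upto m (\<lambda>j. u j - u' j) v = inner_upto m u v - inner_upto m u' v"
  unfolding inner_upto_def by (simp add: left_diff_distrib sum_subtractf)

lemma inner_upto_scale_left: "inner_upto m (\<lambda>j. c * u j) v = c * inner_upto m u v"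
  unfolding inner_upto_def by (simp add: sum_distrib_left mult.assoc)

lemma inner_upto_sum_left: "inner_upto m (\<lambda>j. \<Sum>q\<in>P. f q j) v = (\<Sum>q\<in>P. inner_upto m (f q) v)"
  unfolding inner_upto_def by (simp add: sum_distrib_right sum.swap[of _ P])

lemma inner_upto_self_eq_0: "inner_upto m u u = 0 \<Longrightarrow> inner_upto m v u = 0"
  unfolding inner_upto_def by (subst (asm) sum_nonneg_eq_0_iff) auto

lemma inner_upto_span_right:
  assumes "\<And>v. v \<in> S \<Longrightarrow> inner_upto m r v = 0" "v \<in> fun_space.span S"
  shows "inner_upto m r v = 0"
  using assms(2)
proof (induction rule: fun_space.span_induct)
  case base
  show ?case
    by (simp add: fun_space.subspace_def inner_upto_def sum.distrib distrib_left mult.left_commute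
        flip: sum_distrib_left)
next
  case (step v)
  then show ?case by (rule assms(1))
qed

text \<open>One Gram--Schmidt step: a residual \<open>r\<close> orthogonal to \<open>\<phi> ` P\<close> is corrected by a multiple of
  the component \<open>u\<close> of \<open>\<phi> v\<close> orthogonal to \<open>\<phi> ` P\<close>. When \<open>u\<close> vanishes, the division by
  \<open>\<langle>u, u\<rangle> = 0\<close> yields the coefficient \<open>0\<close>, which is what is wanted.\<close>

lemma inner_upto_orthogonalize_step:
  assumes r: "\<And>p. p \<in> P \<Longrightarrow> inner_upto m r (\<phi> p) = 0"
    and u: "\<And>p. p \<in> P \<Longrightarrow> inner_upto m u (\<phi> p) = 0"
    and v: "\<phi> v = (\<lambda>j. u j + (\<Sum>q\<in>P. e q * \<phi> q j))"
  defines "t \<equiv> inner_upto m r u / inner_upto m u u"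
  shows "\<forall>p\<in>insert v P. inner_upto m (\<lambda>j. r j - t * u j) (\<phi> p) = 0"
proof -
  define r' where "r' = (\<lambda>j. r j - t * u j)"
  have orth_P: "inner_upto m r' (\<phi> p) = 0" if "p \<in> P" for p
    using r u that unfolding r'_def by (simp add: inner_upto_diff_left inner_upto_scale_left)
  have "inner_upto m r' u = inner_upto m r u - t * inner_upto m u u"
    unfolding r'_def by (simp add: inner_upto_diff_left inner_upto_scale_left)
  also have "\<dots> = 0"
    using inner_upto_self_eq_0[of m u r] unfolding t_def by (cases "inner_upto m u u = 0") auto
  finally have orth_u: "inner_upto m r' u = 0" .
  have "inner_upto m (\<phi> v) r' = inner_upto m u r' + (\<Sum>q\<in>P. e q * inner_upto m (\<phi> q) r')"
    unfolding v by (simp add: inner_upto_add_left inner_upto_sum_left inner_upto_scale_left)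
  also have "\<dots> = 0"
    using orth_u orth_P by (simp add: inner_upto_commute[of m _ r'])
  finally have "inner_upto m r' (\<phi> v) = 0" by (simp add: inner_upto_commute)
  with orth_P show ?thesis unfolding r'_def by blast
qed

lemma finite_orthogonal_projection:
  fixes \<phi> :: "'b \<Rightarrow> nat \<Rightarrow> real"
  assumes "finite P"
  shows "\<exists>d. \<forall>p\<in>P. inner_upto m (\<lambda>j. a j - (\<Sum>q\<in>P. d q * \<phi> q j)) (\<phi> p) = 0"
  using assms
proof (induction arbitrary: a rule: finite_induct)
  case empty
  show ?case by simp
next
  case (insert v P)
  obtain c where c: "\<forall>p\<in>P. inner_upto m (\<lambda>j. a j - (\<Sum>q\<in>P. c q * \<phi> q j)) (\<phi> p) = 0"
    using insert.IH by blast
  obtain e where e: "\<forall>p\<in>P. inner_upto m (\<lambda>j. \<phi> v j - (\<Sum>q\<in>P. e q * \<phi> q j)) (\<phi> p) = 0"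
    using insert.IH by blast
  define r where "r = (\<lambda>j. a j - (\<Sum>q\<in>P. c q * \<phi> q j))"
  define u where "u = (\<lambda>j. \<phi> v j - (\<Sum>q\<in>P. e q * \<phi> q j))"
  define t where "t = inner_upto m r u / inner_upto m u u"
  define d where "d = (\<lambda>q. c q - t * e q)(v := t)"
  have "a j - (\<Sum>q\<in>insert v P. d q * \<phi> q j) = r j - t * u j" for j
  proof -
    have "(\<Sum>q\<in>P. d q * \<phi> q j) = (\<Sum>q\<in>P. (c q - t * e q) * \<phi> q j)"
      using insert.hyps(2) unfolding d_def by (intro sum.cong) auto
    also have "\<dots> = (\<Sum>q\<in>P. c q * \<phi> q j) - t * (\<Sum>q\<in>P. e q * \<phi> q j)"
      by (simp add: sum_subtractf sum_distrib_left left_diff_distrib mult.assoc)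
    finally show ?thesis using insert.hyps unfolding r_def u_def d_def by (simp add: algebra_simps)
  qed
  moreover have "\<forall>p\<in>insert v P. inner_upto m (\<lambda>j. r j - t * u j) (\<phi> p) = 0"
    unfolding t_def by (rule inner_upto_orthogonalize_step) (use c e in \<open>auto simp: r_def u_def\<close>)
  ultimately show ?case by (intro exI[of _ d]) simp
qed

lemma finite_spanning_subset:
  fixes \<phi> :: "'b \<Rightarrow> nat \<Rightarrow> real"
  assumes vanish: "\<forall>y j. m \<le> j \<longrightarrow> \<phi> y j = 0"
  obtains P where "finite P" "range \<phi> \<subseteq> fun_space.span (\<phi> ` P)"
proof -
  obtain B where B: "B \<subseteq> range \<phi>" "fun_space.independent B" "range \<phi> \<subseteq> fun_space.span B"
    by (rule fun_space.maximal_independent_subset)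
  define e where "e i j = (if i = j then 1 else 0 :: real)" for i j :: nat
  have coordinates: "(\<Sum>i<m. \<phi> y i * e i j) = \<phi> y j" for y j
  proof -
    have "(\<Sum>i<m. \<phi> y i * e i j) = (\<Sum>i<m. if i = j then \<phi> y j else 0)"
      by (intro sum.cong) (auto simp: e_def)
    then show ?thesis using vanish by (simp add: not_less)
  qed
  have expansion: "\<phi> y = (\<Sum>i<m. (\<lambda>j. \<phi> y i * e i j))" for y
    by (simp add: fun_eq_iff sum_fun_apply coordinates)
  have "\<phi> y \<in> fun_space.span (e ` {..<m})" for y
    by (subst expansion, intro fun_space.span_sum fun_space.span_scale fun_space.span_base) auto
  then have "B \<subseteq> fun_space.span (e ` {..<m})" using B(1) by auto
  then have "finite B"
    using fun_space.independent_span_bound[OF finite_imageI[OF finite_lessThan] B(2)] by blast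
  then obtain P where "finite P" "B = \<phi> ` P"
    using finite_subset_image[OF _ B(1)] by blast
  with B(3) show thesis using that by blast
qed

lemma orthogonal_projection_onto_features:
  fixes \<phi> :: "'b \<Rightarrow> nat \<Rightarrow> real"
  assumes "\<forall>y j. m \<le> j \<longrightarrow> \<phi> y j = 0"
  obtains P d where "finite P" "\<And>y. inner_upto m (\<lambda>j. a j - (\<Sum>p\<in>P. d p * \<phi> p j)) (\<phi> y) = 0"
proof -
  obtain P where P: "finite P" "range \<phi> \<subseteq> fun_space.span (\<phi> ` P)"
    using finite_spanning_subset[OF assms] by blast
  obtain d where d: "\<forall>p\<in>P. inner_upto m (\<lambda>j. a j - (\<Sum>q\<in>P. d q * \<phi> q j)) (\<phi> p) = 0"
    using finite_orthogonal_projection[OF P(1)] by blast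
  have "inner_upto m (\<lambda>j. a j - (\<Sum>q\<in>P. d q * \<phi> q j)) (\<phi> y) = 0" for y
    by (rule inner_upto_span_right[of "\<phi> ` P"]) (use d P(2) in auto)
  with P(1) show thesis by (rule that)
qed

lemma ridge_net_kernel_expansion:
  fixes h :: "real^'n \<Rightarrow> real"
  assumes "h \<in> ridge_nets \<sigma>"
  shows "\<exists>k\<in>kernel_family \<sigma>. \<exists>(s::nat) (d::nat \<Rightarrow> real) (xs::nat \<Rightarrow> real^'n).
           \<forall>x. (\<Sum>l<s. d l * k x (xs l)) = h x"
proof -
  obtain m :: nat and a w b where h: "h = (\<lambda>x. \<Sum>j<m. a j * \<sigma> (w j \<bullet> x + b j))"
    using ridge_nets_explicit[OF assms] by blast
  define \<phi> where "\<phi> y j = (if j < m then \<sigma> (inner y (w j) + b j) else 0)" for y j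
  define k where "k x y = (\<Sum>j<m. 1 * \<sigma> (inner x (w j) + b j) * \<sigma> (inner y (w j) + b j))"
    for x y :: "real^'n"
  have "k \<in> kernel_family \<sigma>"
    unfolding kernel_family_def k_def
    by (intro CollectI exI[of _ m] exI[of _ "\<lambda>_. 1"] exI[of _ w] exI[of _ b]) simp
  have k_features: "k x y = inner_upto m (\<phi> x) (\<phi> y)" for x y
    unfolding k_def inner_upto_def by (intro sum.cong) (auto simp: \<phi>_def)
  have h_features: "h x = inner_upto m a (\<phi> x)" for x
    unfolding h inner_upto_def by (intro sum.cong) (auto simp: \<phi>_def inner_commute)
  have "\<forall>y j. m \<le> j \<longrightarrow> \<phi> y j = 0" by (simp add: \<phi>_def)
  then obtain P d where P: "finite P" "\<And>y. inner_upto m (\<lambda>j. a j - (\<Sum>p\<in>P. d p * \<phi> p j)) (\<phi> y) = 0"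
    using orthogonal_projection_onto_features[where a = a] by blast
  obtain xs where xs: "bij_betw xs {..<card P} P"
    using ex_bij_betw_nat_finite[OF P(1)] unfolding atLeast0LessThan by blast
  have "(\<Sum>l<card P. d (xs l) * k x (xs l)) = h x" for x
  proof -
    have "(\<Sum>l<card P. d (xs l) * k x (xs l)) = (\<Sum>p\<in>P. d p * k x p)"
      using sum.reindex_bij_betw[OF xs, of "\<lambda>p. d p * k x p"] by simp
    also have "\<dots> = inner_upto m (\<lambda>j. \<Sum>p\<in>P. d p * \<phi> p j) (\<phi> x)"
      by (simp add: k_features inner_upto_sum_left inner_upto_scale_left
          inner_upto_commute[of m "\<phi> x"])
    also have "\<dots> = h x"
      using P(2)[of x] by (simp add: inner_upto_diff_left h_features)
    finally show ?thesis .
  qed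
  then show ?thesis
    using \<open>k \<in> kernel_family \<sigma>\<close>
    by (intro bexI[of _ k] exI[of _ "card P"] exI[of _ "d \<circ> xs"] exI[of _ xs]) auto
qed

theorem theorem5p3:
  fixes \<sigma> :: "real \<Rightarrow> real"
    and f :: "real^'n \<Rightarrow> real"
    and K :: "(real^'n) set"
    and \<epsilon> :: real
  assumes "continuous_on UNIV \<sigma>"
    and "\<not> is_polynomial_fun \<sigma>"
    and "continuous_on UNIV f"
    and "compact K"
    and "\<epsilon> > 0"
  shows "\<exists>k \<in> kernel_family \<sigma>. \<exists>(s::nat) (d::nat \<Rightarrow> real) (xs::nat \<Rightarrow> real^'n).
           (\<forall>x\<in>K. \<bar>f x - (\<Sum>l<s. d l * k x (xs l))\<bar> < \<epsilon>)"
proof -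
  have "f \<in> net_closure \<sigma>"
    using continuous_in_net_closure assms(1-3) by blast
  then obtain h where "h \<in> ridge_nets \<sigma>" "\<forall>x\<in>K. \<bar>f x - h x\<bar> < \<epsilon>"
    using locally_uniform_closureD assms(4,5) by blast
  moreover obtain k and s :: nat and d :: "nat \<Rightarrow> real" and xs :: "nat \<Rightarrow> real^'n"
    where "k \<in> kernel_family \<sigma>" "\<forall>x. (\<Sum>l<s. d l * k x (xs l)) = h x"
    using ridge_net_kernel_expansion[OF \<open>h \<in> ridge_nets \<sigma>\<close>] by blast
  ultimately show ?thesis
    by (intro bexI[of _ k] exI[of _ s] exI[of _ d] exI[of _ xs]) auto
qed

end
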